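(* For every $\delta>0$ there exist $n\ge1$, a pool $\mathcal D=\{(p_i,t_i)\}_{i=1}^n$ with $p_i\in[0,1]$, $t_i>0$, and a budget $T>0$, such that the greedy forward selection strategy operating on the usefulness values $u_i=p_i/t_i$ (defined in the context) outputs an ensemble $S$ with majority-voting accuracy $q(S)\le 1/2+\delta$, while there is an index set $\mathcal L\subseteq\{1,\dots,n\}$ with $\sum_{i\in\mathcal L}t_i\le T$ and $q(\mathcal L)\ge 1-\delta$; i.e., its error (optimal constrained accuracy minus output accuracy) can be arbitrarily close to $1/2$.
   Context: A pool consists of candidate members $i=1,\dots,n$, each with accuracy $p_i\in[0,1]$ and cost $t_i>0$; a budget $T>0$ is given; the usefulness of member $i$ is $u_i=p_i/t_i$. For a nonempty index set $\mathcal L$ with $|\mathcal L|=\ell$, the (majority voting) accuracy is $q(\mathcal L)=\sum_{k=\lfloor \ell/2\rfloor+1}^{\ell}\sum_{\mathcal I\subseteq\mathcal L,|\mathcal I|=k}\prod_{i\in\mathcal I}p_i\prod_{j\in\mathcal L\setminus\mathcal I}(1-p_j)$. Greedy forward selection by usefulness: start with $S$ consisting of a single member of maximal usefulness $u_i$; then repeatedly, among the members $j\notin S$ with $\sum_{i\in S}t_i+t_j\le T$, take one of maximal usefulness (ties broken by larger $q(S\cup\{j\})$); if $q(S\cup\{j\})>q(S)$, add $j$ to $S$ and continue, otherwise (or if no such $j$ exists) stop and output $S$. *)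

theory Defs
  imports Complex_Main
begin

text \<open>Pool: members indexed by 1..n, accuracies p i, costs t i, budget T.\<close>

definition usefulness :: "(nat \<Rightarrow> real) \<Rightarrow> (nat \<Rightarrow> real) \<Rightarrow> nat \<Rightarrow> real" where
  "usefulness p t i = p i / t i"

definition mv_acc :: "(nat \<Rightarrow> real) \<Rightarrow> nat set \<Rightarrow> real" where
  "mv_acc p L = (\<Sum>k = card L div 2 + 1 .. card L.
      \<Sum>I \<in> {I. I \<subseteq> L \<and> card I = k}. (\<Prod>i\<in>I. p i) * (\<Prod>j\<in>L - I. (1 - p j)))"

definition candidates :: "nat \<Rightarrow> (nat \<Rightarrow> real) \<Rightarrow> real \<Rightarrow> nat set \<Rightarrow> nat set" where
  "candidates n t T S = {j \<in> {1..n} - S. sum t S + t j \<le> T}"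

text \<open>j is a legal greedy choice at state S: maximal usefulness among candidates,
  ties broken by larger accuracy of the extended ensemble (remaining ties arbitrary).\<close>
definition greedy_choice ::
  "nat \<Rightarrow> (nat \<Rightarrow> real) \<Rightarrow> (nat \<Rightarrow> real) \<Rightarrow> real \<Rightarrow> nat set \<Rightarrow> nat \<Rightarrow> bool" where
  "greedy_choice n p t T S j \<longleftrightarrow>
     j \<in> candidates n t T S \<and>
     (\<forall>j' \<in> candidates n t T S. usefulness p t j' \<le> usefulness p t j) \<and>
     (\<forall>j' \<in> candidates n t T S. usefulness p t j' = usefulness p t j \<longrightarrow>
          mv_acc p (insert j' S) \<le> mv_acc p (insert j S))"

inductive greedy_reach ::
  "nat \<Rightarrow> (nat \<Rightarrow> real) \<Rightarrow> (nat \<Rightarrow> real) \<Rightarrow> real \<Rightarrow> nat set \<Rightarrow> bool"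
  for n p t T where
  init: "\<lbrakk> i \<in> {1..n}; \<forall>i' \<in> {1..n}. usefulness p t i' \<le> usefulness p t i \<rbrakk>
         \<Longrightarrow> greedy_reach n p t T {i}"
| step: "\<lbrakk> greedy_reach n p t T S; greedy_choice n p t T S j;
          mv_acc p (insert j S) > mv_acc p S \<rbrakk>
         \<Longrightarrow> greedy_reach n p t T (insert j S)"

definition greedy_output ::
  "nat \<Rightarrow> (nat \<Rightarrow> real) \<Rightarrow> (nat \<Rightarrow> real) \<Rightarrow> real \<Rightarrow> nat set \<Rightarrow> bool" where
  "greedy_output n p t T S \<longleftrightarrow> greedy_reach n p t T S \<and>
     (candidates n t T S = {} \<or>
      (\<exists>j. greedy_choice n p t T S j \<and> \<not> mv_acc p (insert j S) > mv_acc p S))"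

end

theory Submission imports Defs begin

(* A cheap coin-flipping member (accuracy 1/2, cost 1/4) beats a perfect member
   (accuracy 1, cost 1) in usefulness, so greedy selection takes it first; with budget 1
   the perfect member then no longer fits, and greedy stops at accuracy 1/2, whereas the
   perfect member alone has accuracy 1. The error is thus 1/2 itself, for every delta. *)

lemma mv_acc_singleton: "mv_acc p {a} = p a"
proof -
  have "{I. I \<subseteq> {a} \<and> card I = 1} = {{a}}"
    by (auto simp: subset_singleton_iff)
  then show ?thesis
    by (simp add: mv_acc_def)
qed

lemma greedy_reach_iff_singleton:
  assumes "i \<in> {1..n}"
    and "\<forall>i' \<in> {1..n} - {i}. usefulness p t i' < usefulness p t i"
    and "candidates n t T {i} = {}"
  shows "greedy_reach n p t T S \<longleftrightarrow> S = {i}"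
proof
  assume "greedy_reach n p t T S"
  then show "S = {i}"
  proof induction
    case (init i')
    show ?case
    proof (rule ccontr)
      assume "{i'} \<noteq> {i}"
      with init(1) assms(2) have "usefulness p t i' < usefulness p t i"
        by blast
      moreover from init(2) assms(1) have "usefulness p t i \<le> usefulness p t i'"
        by blast
      ultimately show False
        by simp
    qed
  next
    case (step S j)
    then have "j \<in> candidates n t T {i}"
      by (simp add: greedy_choice_def)
    with assms(3) show ?case
      by simp
  qed
next
  assume "S = {i}"
  moreover have "\<forall>i' \<in> {1..n}. usefulness p t i' \<le> usefulness p t i"
    using assms(2) by (metis Diff_iff dual_order.refl less_imp_le singletonD)
  ultimately show "greedy_reach n p t T S"
    using assms(1) by (simp add: greedy_reach.init)
qed

lemma greedy_output_iff_singleton: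
  assumes "i \<in> {1..n}"
    and "\<forall>i' \<in> {1..n} - {i}. usefulness p t i' < usefulness p t i"
    and "candidates n t T {i} = {}"
  shows "greedy_output n p t T S \<longleftrightarrow> S = {i}"
  using greedy_reach_iff_singleton[OF assms] assms(3)
  by (auto simp: greedy_output_def)

theorem corollary1:
  fixes \<delta> :: real
  assumes "\<delta> > 0"
  shows "\<exists>(n::nat) (p::nat \<Rightarrow> real) (t::nat \<Rightarrow> real) (T::real).
           n \<ge> 1 \<and> (\<forall>i\<in>{1..n}. 0 \<le> p i \<and> p i \<le> 1 \<and> t i > 0) \<and> T > 0 \<and>
           (\<exists>S. greedy_output n p t T S) \<and>
           (\<forall>S. greedy_output n p t T S \<longrightarrow> mv_acc p S \<le> 1/2 + \<delta>) \<and>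
           (\<exists>L. L \<subseteq> {1..n} \<and> L \<noteq> {} \<and> sum t L \<le> T \<and> mv_acc p L \<ge> 1 - \<delta>)"
proof -
  define p :: "nat \<Rightarrow> real" where "p = (\<lambda>i. if i = 1 then 1/2 else 1)"
  define t :: "nat \<Rightarrow> real" where "t = (\<lambda>i. if i = 1 then 1/4 else 1)"
  have pool: "\<forall>i \<in> {1..2::nat}. 0 \<le> p i \<and> p i \<le> 1 \<and> t i > 0"
    by (simp add: p_def t_def)
  have "\<forall>i' \<in> {1..2} - {1}. usefulness p t i' < usefulness p t 1"
    by (auto simp: usefulness_def p_def t_def)
  moreover have "candidates 2 t 1 {1} = {}"
    by (auto simp: candidates_def t_def)
  ultimately have outputs: "greedy_output 2 p t 1 S \<longleftrightarrow> S = {1}" for S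
    by (simp add: greedy_output_iff_singleton)
  have "\<exists>S. greedy_output 2 p t 1 S"
    using outputs by blast
  moreover have "\<forall>S. greedy_output 2 p t 1 S \<longrightarrow> mv_acc p S \<le> 1/2 + \<delta>"
    using outputs assms by (simp add: mv_acc_singleton p_def)
  moreover have "\<exists>L. L \<subseteq> {1..2} \<and> L \<noteq> {} \<and> sum t L \<le> 1 \<and> mv_acc p L \<ge> 1 - \<delta>"
    using assms by (intro exI[of _ "{2}"]) (simp add: mv_acc_singleton p_def t_def)
  ultimately show ?thesis
    using pool by (intro exI[of _ 2] exI[of _ p] exI[of _ t] exI[of _ 1]) simp
qed

end
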